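(* The function $\overrightarrow{\mathrm{AC}}$ does not satisfy the triangle inequality: there exist languages $X,Y,Z$ over a finite alphabet with $\overrightarrow{\mathrm{AC}}(X,Z)>\overrightarrow{\mathrm{AC}}(X,Y)+\overrightarrow{\mathrm{AC}}(Y,Z)$.
   Context: For words $x,y$, $\mathrm{ed}(x,y)$ is the Levenshtein edit distance (minimum number of single-letter insertions, deletions and substitutions transforming $x$ into $y$). For languages $X,Y$, \[ \overrightarrow{\mathrm{AC}}(X,Y)=\lim_{n\to\infty}\ \sup_{x\in X,\ |x|\ge n}\ \inf_{y\in Y}\frac{\mathrm{ed}(x,y)}{|x|}. \] *)

theory Defs
  imports Complex_Main "HOL-Library.Extended_Real"
begin

inductive edit_step :: "'a list \<Rightarrow> 'a list \<Rightarrow> bool" where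
  ins: "edit_step (u @ v) (u @ [a] @ v)"
| del: "edit_step (u @ [a] @ v) (u @ v)"
| subst: "edit_step (u @ [a] @ v) (u @ [b] @ v)"

definition ed :: "'a list \<Rightarrow> 'a list \<Rightarrow> nat" where
  "ed x y = (LEAST k. (edit_step ^^ k) x y)"

text \<open>Directed asymptotic closeness AC(X,Y), valued in the extended reals
  (sup over the empty set is -infinity, inf over the empty set is +infinity).\<close>
definition AC :: "'a list set \<Rightarrow> 'a list set \<Rightarrow> ereal" where
  "AC X Y = lim (\<lambda>n. SUP x\<in>{x\<in>X. length x \<ge> n}.
                        INF y\<in>Y. ereal (real (ed x y) / real (length x)))"

end

theory Submission
  imports Defs
begin

text \<open>Take the unary languages \<open>L c = {0^(c * 10^k) | k}\<close>. The edit distance of two unary words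
  is their length difference, so the relative distance from \<open>0^(a * 10^k)\<close> to \<open>L b\<close> does not
  depend on \<open>k\<close>: for \<open>X = L 6\<close>, \<open>Y = L 8\<close>, \<open>Z = L 1\<close> it is \<open>2/3\<close> (nearest word of length
  \<open>10^(k+1)\<close>), \<open>1/3\<close> and \<open>1/4\<close> respectively, and \<open>1/3 + 1/4 < 2/3\<close>. Absolute distances
  do satisfy the triangle inequality here (\<open>2 + 2 = 4\<close>); it fails for \<open>AC\<close> only because the
  intermediate word of \<open>Y\<close> is longer than the word of \<open>X\<close> it approximates, and its distance
  to \<open>Z\<close> is normalised by its own length.\<close>

lemma edit_step_length: "edit_step x y \<Longrightarrow> length y \<le> length x + 1 \<and> length x \<le> length y + 1"
  by (induction rule: edit_step.induct) auto

lemma relpowp_edit_step_length: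
  "(edit_step ^^ k) x y \<Longrightarrow> length y \<le> length x + k \<and> length x \<le> length y + k"
proof (induction k arbitrary: y)
  case 0
  then show ?case by simp
next
  case (Suc k)
  then obtain z where "(edit_step ^^ k) x z" "edit_step z y" by (meson relpowp_Suc_E)
  with Suc.IH[of z] edit_step_length[of z y] show ?case by auto
qed

lemma relpowp_edit_step_replicate_insert: "(edit_step ^^ k) (replicate m a) (replicate (m + k) a)"
proof (induction k)
  case 0
  then show ?case by simp
next
  case (Suc k)
  have "edit_step ([] @ replicate (m + k) a) ([] @ [a] @ replicate (m + k) a)"
    by (rule edit_step.ins)
  then have "edit_step (replicate (m + k) a) (replicate (m + Suc k) a)" by simp
  with Suc show ?case by (rule relpowp_Suc_I)
qed

lemma relpowp_edit_step_replicate_delete: "(edit_step ^^ k) (replicate (m + k) a) (replicate m a)"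
proof (induction k)
  case 0
  then show ?case by simp
next
  case (Suc k)
  have "edit_step ([] @ [a] @ replicate (m + k) a) ([] @ replicate (m + k) a)"
    by (rule edit_step.del)
  then have "edit_step (replicate (m + Suc k) a) (replicate (m + k) a)" by simp
  then show ?case using Suc by (rule relpowp_Suc_I2)
qed

lemma ed_replicate: "ed (replicate m a) (replicate n a) = (m - n) + (n - m)"
  unfolding ed_def
proof (rule Least_equality)
  show "(edit_step ^^ ((m - n) + (n - m))) (replicate m a) (replicate n a)"
    using relpowp_edit_step_replicate_insert[of "n - m" m a]
      relpowp_edit_step_replicate_delete[of "m - n" n a]
    by (cases "m \<le> n") simp_all
next
  fix k
  assume "(edit_step ^^ k) (replicate m a) (replicate n a)"
  from relpowp_edit_step_length[OF this] show "(m - n) + (n - m) \<le> k" by auto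
qed

text \<open>The three hypotheses bound the gap for \<open>j = k\<close>, \<open>j < k\<close> and \<open>j > k\<close> respectively.\<close>

lemma scaled_power_gap:
  fixes a b d j k :: nat
  assumes "d + b \<le> a \<or> d + a \<le> b" and "10 * d + b \<le> 10 * a" and "d + a \<le> 10 * b"
  shows "d * 10 ^ k \<le> (a * 10 ^ k - b * 10 ^ j) + (b * 10 ^ j - a * 10 ^ k)"
proof (cases j k rule: linorder_cases)
  case less
  then have "10 ^ Suc j \<le> (10::nat) ^ k" by (intro power_increasing) auto
  then have "10 * (b * 10 ^ j) \<le> b * 10 ^ k" by simp
  moreover have "10 * d * 10 ^ k + b * 10 ^ k \<le> 10 * a * 10 ^ k"
    using assms(2) by (metis add_mult_distrib mult_le_mono1)
  ultimately show ?thesis by linarith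
next
  case equal
  then show ?thesis
    using assms(1) by (auto simp: algebra_simps dest: mult_le_mono1[where k = "10 ^ k"])
next
  case greater
  then have "10 ^ Suc k \<le> (10::nat) ^ j" by (intro power_increasing) auto
  then have "10 * b * 10 ^ k \<le> b * 10 ^ j" by simp
  moreover have "d * 10 ^ k + a * 10 ^ k \<le> 10 * b * 10 ^ k"
    using assms(3) by (metis add_mult_distrib mult_le_mono1)
  ultimately show ?thesis by linarith
qed

lemma AC_eq_if_INF_const:
  assumes "\<And>n. \<exists>x\<in>X. n \<le> length x"
    and "\<And>x. x \<in> X \<Longrightarrow> (INF y\<in>Y. ereal (real (ed x y) / real (length x))) = c"
  shows "AC X Y = c"
proof -
  have "(SUP x\<in>{x\<in>X. n \<le> length x}. INF y\<in>Y. ereal (real (ed x y) / real (length x))) = c"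
    for n
  proof -
    have "{x\<in>X. n \<le> length x} \<noteq> {}" using assms(1)[of n] by auto
    then show ?thesis by (simp add: assms(2))
  qed
  then show ?thesis unfolding AC_def by (simp add: limI)
qed

definition unary_pow10_lang :: "nat \<Rightarrow> nat list set" where
  "unary_pow10_lang c = range (\<lambda>k. replicate (c * 10 ^ k) 0)"

lemma unary_pow10_lang_lists: "unary_pow10_lang c \<subseteq> lists {0}"
  unfolding unary_pow10_lang_def by auto

lemma infinite_unary_pow10_lang:
  assumes "0 < c"
  shows "infinite (unary_pow10_lang c)"
  unfolding unary_pow10_lang_def
proof (rule range_inj_infinite, rule injI)
  fix k l :: nat
  assume "replicate (c * 10 ^ k) 0 = replicate (c * 10 ^ l) (0::nat)"
  then have "c * 10 ^ k = c * 10 ^ l" by (metis length_replicate)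
  with assms show "k = l" by simp
qed

lemma unary_pow10_lang_unbounded:
  assumes "0 < c"
  shows "\<exists>x\<in>unary_pow10_lang c. n \<le> length x"
proof -
  have "n < 10 ^ n" by (induction n) auto
  also have "\<dots> \<le> c * 10 ^ n" using assms by simp
  finally have "n \<le> length (replicate (c * 10 ^ n) (0::nat))" by simp
  then show ?thesis unfolding unary_pow10_lang_def by blast
qed

lemma INF_ed_ratio_unary_pow10_lang:
  fixes a b d k :: nat
  assumes "0 < a"
    and gap: "d + b \<le> a \<or> d + a \<le> b" "10 * d + b \<le> 10 * a" "d + a \<le> 10 * b"
    and nearest: "a = b + d \<or> b = a + d \<or> 10 * b = a + d"
  defines "x \<equiv> replicate (a * 10 ^ k) 0"
  shows "(INF y\<in>unary_pow10_lang b. ereal (real (ed x y) / real (length x))) = ereal (d / a)"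
proof -
  have ratio: "real (ed x (replicate (b * 10 ^ j) 0)) / real (length x)
      = real ((a * 10 ^ k - b * 10 ^ j) + (b * 10 ^ j - a * 10 ^ k)) / (real a * 10 ^ k)" for j
    unfolding x_def ed_replicate by simp
  have lower: "d / a \<le> real (ed x y) / real (length x)" if "y \<in> unary_pow10_lang b" for y
  proof -
    from that obtain j where y: "y = replicate (b * 10 ^ j) 0"
      unfolding unary_pow10_lang_def by auto
    have "real d * 10 ^ k \<le> real ((a * 10 ^ k - b * 10 ^ j) + (b * 10 ^ j - a * 10 ^ k))"
      using scaled_power_gap[OF gap, of k j]
      by (metis of_nat_le_iff of_nat_mult of_nat_numeral of_nat_power)
    then show ?thesis unfolding y ratio using assms(1) by (simp add: field_simps)
  qed
  obtain j where "(a * 10 ^ k - b * 10 ^ j) + (b * 10 ^ j - a * 10 ^ k) = d * 10 ^ k"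
    using nearest
  proof (elim disjE)
    assume "a = b + d"
    then show ?thesis using that[of k] by (simp add: algebra_simps)
  next
    assume "b = a + d"
    then show ?thesis using that[of k] by (simp add: algebra_simps)
  next
    assume "10 * b = a + d"
    then have "b * 10 ^ Suc k = a * 10 ^ k + d * 10 ^ k"
      by (metis distrib_right mult.assoc mult.commute power_Suc)
    then show ?thesis using that[of "Suc k"] by simp
  qed
  then have attained: "real (ed x (replicate (b * 10 ^ j) 0)) / real (length x) = d / a"
    unfolding ratio using assms(1) by (simp add: field_simps)
  have "replicate (b * 10 ^ j) 0 \<in> unary_pow10_lang b"
    unfolding unary_pow10_lang_def by auto
  with lower attained show ?thesis
    by (intro antisym INF_greatest) (auto intro: INF_lower2)
qed

lemma AC_unary_pow10_lang:
  fixes a b d :: nat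
  assumes "0 < a"
    and "d + b \<le> a \<or> d + a \<le> b" "10 * d + b \<le> 10 * a" "d + a \<le> 10 * b"
    and "a = b + d \<or> b = a + d \<or> 10 * b = a + d"
  shows "AC (unary_pow10_lang a) (unary_pow10_lang b) = ereal (d / a)"
proof (rule AC_eq_if_INF_const)
  show "\<exists>x\<in>unary_pow10_lang a. n \<le> length x" for n
    using assms(1) by (rule unary_pow10_lang_unbounded)
  show "(INF y\<in>unary_pow10_lang b. ereal (real (ed x y) / real (length x))) = ereal (d / a)"
    if "x \<in> unary_pow10_lang a" for x
    using that INF_ed_ratio_unary_pow10_lang[OF assms]
    unfolding unary_pow10_lang_def by blast
qed

theorem mainTheorem12:
  shows "\<exists>(\<Sigma>::nat set) (X::nat list set) Y Z.
           finite \<Sigma> \<and> X \<subseteq> lists \<Sigma> \<and> Y \<subseteq> lists \<Sigma> \<and> Z \<subseteq> lists \<Sigma> \<and>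
           infinite X \<and> infinite Y \<and> infinite Z \<and>
           AC X Z > AC X Y + AC Y Z"
proof (intro exI conjI)
  let ?X = "unary_pow10_lang 6" and ?Y = "unary_pow10_lang 8" and ?Z = "unary_pow10_lang 1"
  show "finite {0::nat}" by simp
  show "?X \<subseteq> lists {0}" "?Y \<subseteq> lists {0}" "?Z \<subseteq> lists {0}"
    by (rule unary_pow10_lang_lists)+
  show "infinite ?X" "infinite ?Y" "infinite ?Z"
    by (simp_all add: infinite_unary_pow10_lang)
  have "AC ?X ?Z = ereal (real 4 / real 6)" by (rule AC_unary_pow10_lang) simp_all
  moreover have "AC ?X ?Y = ereal (real 2 / real 6)" by (rule AC_unary_pow10_lang) simp_all
  moreover have "AC ?Y ?Z = ereal (real 2 / real 8)" by (rule AC_unary_pow10_lang) simp_all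
  ultimately show "AC ?X ?Y + AC ?Y ?Z < AC ?X ?Z" by simp
qed

end
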